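(* Let $A$ be an approximately unital Banach algebra such that ${\mathfrak r}_A$ is weak* dense in ${\mathfrak r}_{A^{**}}$. Then $\{x\in{\mathfrak r}_A:\|x\|\le1\}$ is weak* dense in $\{\eta\in{\mathfrak r}_{A^{**}}:\|\eta\|\le1\}$. If in addition there exists a mixed identity of norm $1$ for $A^{**}$ lying in ${\mathfrak r}_{A^{**}}$, then $A$ has a contractive approximate identity in ${\mathfrak r}_A$.
   Context: Banach algebras are complex with submultiplicative norm; "unital" means identity of norm 1; approximately unital means having a contractive approximate identity. Multiplier unitization $A^1$: $A$ if unital, otherwise $A+\mathbb{C}1$ with $\|a+\lambda1\|=\sup\{\|ac+\lambda c\|:c\in A,\|c\|\le1\}$. ${\mathfrak r}_A=\{a:\mathrm{Re}\,\varphi(a)\ge0$ for all $\varphi\in(A^1)^*$ with $\|\varphi\|=\varphi(1)=1\}$. Biduals carry the second Arens product; $A^{**}\cong A^{\perp\perp}\subset(A^1)^{**}$; ${\mathfrak r}_{A^{**}}=A^{**}\cap{\mathfrak r}_{(A^1)^{**}}$, where ${\mathfrak r}_{(A^1)^{**}}$ is the set of elements of the unital algebra $(A^1)^{**}$ at which every state has nonnegative real part. A mixed identity for $A^{**}$ is an element that is a right identity for the first Arens product and a left identity for the second Arens product. *)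

theory Defs
  imports "HOL-Analysis.Analysis"
begin

text \<open>A complex Banach algebra is modelled as a type of class real_normed_algebra
  and banach (associative, submultiplicative norm, complete; no unit required)
  together with a map J (multiplication by the imaginary unit).\<close>

definition cscale :: "('a::real_vector \<Rightarrow> 'a) \<Rightarrow> complex \<Rightarrow> 'a \<Rightarrow> 'a" where
  "cscale J c x = Re c *\<^sub>R x + Im c *\<^sub>R J x"

definition complex_structure :: "('a::real_normed_algebra \<Rightarrow> 'a) \<Rightarrow> bool" where
  "complex_structure J \<longleftrightarrow> linear J \<and> (\<forall>x. J (J x) = - x)
     \<and> (\<forall>x y. J (x * y) = J x * y \<and> J (x * y) = x * J y)
     \<and> (\<forall>c x. norm (cscale J c x) = cmod c * norm x)"

record 'v cspace =
  carr :: "'v set"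
  addv :: "'v \<Rightarrow> 'v \<Rightarrow> 'v"
  smulv :: "complex \<Rightarrow> 'v \<Rightarrow> 'v"
  nrm :: "'v \<Rightarrow> real"

definition dual :: "'v cspace \<Rightarrow> ('v \<Rightarrow> complex) cspace" where
  "dual S = \<lparr> carr = {f. (\<forall>x\<in>carr S. \<forall>y\<in>carr S. f (addv S x y) = f x + f y)
                      \<and> (\<forall>c. \<forall>x\<in>carr S. f (smulv S c x) = c * f x)
                      \<and> (\<exists>K. \<forall>x\<in>carr S. cmod (f x) \<le> K * nrm S x)
                      \<and> (\<forall>x. x \<notin> carr S \<longrightarrow> f x = 0)},
             addv = (\<lambda>f g x. f x + g x),
             smulv = (\<lambda>c f x. c * f x),
             nrm = (\<lambda>f. Sup {cmod (f x) | x. x \<in> carr S \<and> nrm S x \<le> 1}) \<rparr>"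

definition canon :: "'v cspace \<Rightarrow> 'v \<Rightarrow> (('v \<Rightarrow> complex) \<Rightarrow> complex)" where
  "canon S x = (\<lambda>f. if f \<in> carr (dual S) then f x else 0)"

text \<open>Weak* density in a dual space X = dual S: D is weak* dense in E if every
  element of E lies in the weak* closure of D (basic weak* neighbourhoods).\<close>
definition wstar_dense :: "'v cspace \<Rightarrow> ('v \<Rightarrow> complex) set \<Rightarrow> ('v \<Rightarrow> complex) set \<Rightarrow> bool" where
  "wstar_dense S D E \<longleftrightarrow> (\<forall>\<Phi>\<in>E. \<forall>F. finite F \<and> F \<subseteq> carr S \<longrightarrow>
      (\<forall>\<epsilon>>0. \<exists>d\<in>D. \<forall>x\<in>F. cmod (d x - \<Phi> x) < \<epsilon>))"

definition Aspace :: "('a::real_normed_algebra \<Rightarrow> 'a) \<Rightarrow> 'a cspace" where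
  "Aspace J = \<lparr> carr = UNIV, addv = (+), smulv = cscale J, nrm = norm \<rparr>"

definition is_identity :: "'a::real_normed_algebra \<Rightarrow> bool" where
  "is_identity e \<longleftrightarrow> (\<forall>x. e * x = x \<and> x * e = x) \<and> norm e = 1"

definition unital_alg :: "'a::real_normed_algebra itself \<Rightarrow> bool" where
  "unital_alg _ \<longleftrightarrow> (\<exists>e::'a. is_identity e)"

definition approx_unital :: "'a::real_normed_algebra itself \<Rightarrow> bool" where
  "approx_unital _ \<longleftrightarrow> (\<exists>F :: 'a filter. F \<noteq> bot \<and> eventually (\<lambda>x. norm x \<le> 1) F \<and>
      (\<forall>a. ((\<lambda>x. x * a) \<longlongrightarrow> a) F \<and> ((\<lambda>x. a * x) \<longlongrightarrow> a) F))"

text \<open>Multiplier unitization A^1, realised on 'a \<times> complex: if A is unital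
  the carrier is A \<times> {0} (i.e. A^1 = A), otherwise A + C1 with the multiplier norm.\<close>
definition unitz :: "('a::real_normed_algebra \<Rightarrow> 'a) \<Rightarrow> ('a \<times> complex) cspace" where
  "unitz J = \<lparr> carr = (if unital_alg TYPE('a) then {p. snd p = 0} else UNIV),
               addv = (\<lambda>(a, l) (b, m). (a + b, l + m)),
               smulv = (\<lambda>c (a, l). (cscale J c a, c * l)),
               nrm = (\<lambda>(a, l). if unital_alg TYPE('a) then norm a
                        else Sup {norm (a * c + cscale J l c) | c. norm c \<le> 1}) \<rparr>"

definition unitz_one :: "'a::real_normed_algebra itself \<Rightarrow> 'a \<times> complex" where
  "unitz_one _ = (if unital_alg TYPE('a) then (SOME e. is_identity e, 0) else (0, 1))"

definition states :: "'v cspace \<Rightarrow> 'v \<Rightarrow> ('v \<Rightarrow> complex) set" where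
  "states S u = {\<phi> \<in> carr (dual S). nrm (dual S) \<phi> = 1 \<and> \<phi> u = 1}"

definition rA :: "('a::real_normed_algebra \<Rightarrow> 'a) \<Rightarrow> 'a set" where
  "rA J = {a. \<forall>\<phi>\<in>states (unitz J) (unitz_one TYPE('a)). 0 \<le> Re (\<phi> (a, 0))}"

text \<open>r of the unital algebra (A^1)**, whose identity is the canonical image of 1.\<close>
definition rA1bidual :: "('a::real_normed_algebra \<Rightarrow> 'a)
     \<Rightarrow> ((('a \<times> complex) \<Rightarrow> complex) \<Rightarrow> complex) set" where
  "rA1bidual J = {\<eta> \<in> carr (dual (dual (unitz J))).
      \<forall>\<psi>\<in>states (dual (dual (unitz J))) (canon (unitz J) (unitz_one TYPE('a))).
         0 \<le> Re (\<psi> \<eta>)}"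

text \<open>Identification of A** with A^{\<perp>\<perp>} in (A^1)** (second adjoint of the inclusion).\<close>
definition bidual_incl :: "('a::real_normed_algebra \<Rightarrow> 'a) \<Rightarrow> (('a \<Rightarrow> complex) \<Rightarrow> complex)
     \<Rightarrow> ((('a \<times> complex) \<Rightarrow> complex) \<Rightarrow> complex)" where
  "bidual_incl J \<Phi> = (\<lambda>\<phi>. if \<phi> \<in> carr (dual (unitz J)) then \<Phi> (\<lambda>a. \<phi> (a, 0)) else 0)"

definition rAbidual :: "('a::real_normed_algebra \<Rightarrow> 'a) \<Rightarrow> (('a \<Rightarrow> complex) \<Rightarrow> complex) set" where
  "rAbidual J = {\<Phi> \<in> carr (dual (dual (Aspace J))). bidual_incl J \<Phi> \<in> rA1bidual J}"

definition arens1 :: "('a::real_normed_algebra \<Rightarrow> 'a) \<Rightarrow> (('a \<Rightarrow> complex) \<Rightarrow> complex)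
     \<Rightarrow> (('a \<Rightarrow> complex) \<Rightarrow> complex) \<Rightarrow> (('a \<Rightarrow> complex) \<Rightarrow> complex)" where
  "arens1 J \<Phi> \<Psi> = (\<lambda>f. if f \<in> carr (dual (Aspace J))
       then \<Phi> (\<lambda>a. \<Psi> (\<lambda>b. f (a * b))) else 0)"

definition arens2 :: "('a::real_normed_algebra \<Rightarrow> 'a) \<Rightarrow> (('a \<Rightarrow> complex) \<Rightarrow> complex)
     \<Rightarrow> (('a \<Rightarrow> complex) \<Rightarrow> complex) \<Rightarrow> (('a \<Rightarrow> complex) \<Rightarrow> complex)" where
  "arens2 J \<Phi> \<Psi> = (\<lambda>f. if f \<in> carr (dual (Aspace J))
       then \<Psi> (\<lambda>a. \<Phi> (\<lambda>b. f (b * a))) else 0)"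

definition mixed_identity :: "('a::real_normed_algebra \<Rightarrow> 'a) \<Rightarrow> (('a \<Rightarrow> complex) \<Rightarrow> complex) \<Rightarrow> bool" where
  "mixed_identity J E \<longleftrightarrow> E \<in> carr (dual (dual (Aspace J))) \<and>
     (\<forall>\<Phi>\<in>carr (dual (dual (Aspace J))). arens1 J \<Phi> E = \<Phi> \<and> arens2 J E \<Phi> = \<Phi>)"

end

theory Submission
  imports Defs "HOL-Library.Function_Algebras"
begin

(* Both statements come from real Hahn-Banach separation, proved below via Zorn's lemma,
   together with complexification of real functionals.

   Density: if the unit ball of rA missed a weak* neighbourhood of some eta in the unit ball
   of rA**, some phi in A* would separate them: Re phi <= Re eta(phi) - eps on the ball, hence
   Re phi <= beta * norm on the cone rA with beta = Re eta(phi) - eps. Hahn-Banach on that cone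
   yields g in A* with norm g <= beta and Re (phi - g) <= 0 on rA; weak* density of rA in rA**
   then gives Re eta(phi - g) <= 0, so Re eta(phi) <= beta, a contradiction.

   Approximate identity: weak* approximants of the mixed identity E from the unit ball of rA
   satisfy psi(c a - a) -> 0 and psi(a c - a) -> 0 for every psi in A*, because E is a left
   identity for one Arens product and a right identity for the other. The unit ball of rA is
   convex, so separation in a finite power of A upgrades this weak approximate identity to a
   norm approximate identity. *)

section \<open>Hahn-Banach for sublinear functionals\<close>

definition sublinear :: "('v::real_vector \<Rightarrow> real) \<Rightarrow> bool" where
  "sublinear p \<longleftrightarrow> (\<forall>x y. p (x + y) \<le> p x + p y) \<and> (\<forall>r x. 0 < r \<longrightarrow> p (r *\<^sub>R x) \<le> r * p x)"

definition dominated_graph :: "('v::real_vector \<Rightarrow> real) \<Rightarrow> ('v \<times> real) set \<Rightarrow> bool" where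
  "dominated_graph p G \<longleftrightarrow> subspace G \<and> single_valued G \<and> (\<forall>(x, y)\<in>G. y \<le> p x)"

lemma dominated_graph_Union_chain:
  assumes "C \<in> chains {G. dominated_graph p G}" and "C \<noteq> {}"
  shows "dominated_graph p (\<Union>C)"
proof -
  have dom: "\<And>G. G \<in> C \<Longrightarrow> dominated_graph p G"
    using chainsD2[OF assms(1)] by blast
  have common: "\<exists>K\<in>C. G \<subseteq> K \<and> H \<subseteq> K" if "G \<in> C" "H \<in> C" for G H
    using chainsD[OF assms(1) that] that by blast
  have sub: "\<And>G. G \<in> C \<Longrightarrow> subspace G" and sv: "\<And>G. G \<in> C \<Longrightarrow> single_valued G"
    and le: "\<And>G x y. G \<in> C \<Longrightarrow> (x, y) \<in> G \<Longrightarrow> y \<le> p x"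
    using dom unfolding dominated_graph_def by blast+
  have "subspace (\<Union>C)"
  proof (rule subspaceI)
    obtain G where "G \<in> C" using assms(2) by blast
    then show "0 \<in> \<Union>C" using subspace_0[OF sub] by blast
  next
    fix x y assume "x \<in> \<Union>C" "y \<in> \<Union>C"
    then obtain G H where "G \<in> C" "H \<in> C" "x \<in> G" "y \<in> H" by blast
    then obtain K where "K \<in> C" "x \<in> K" "y \<in> K" using common by blast
    then show "x + y \<in> \<Union>C" using subspace_add[OF sub] by blast
  next
    fix c x assume "x \<in> \<Union>C"
    then show "c *\<^sub>R x \<in> \<Union>C" using subspace_scale[OF sub] by blast
  qed
  moreover have "single_valued (\<Union>C)"
  proof (rule single_valuedI)
    fix x y z assume "(x, y) \<in> \<Union>C" "(x, z) \<in> \<Union>C"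
    then obtain G H where "G \<in> C" "H \<in> C" "(x, y) \<in> G" "(x, z) \<in> H" by blast
    then obtain K where "K \<in> C" "(x, y) \<in> K" "(x, z) \<in> K" using common by blast
    then show "y = z" using sv single_valuedD by metis
  qed
  ultimately show ?thesis
    using le unfolding dominated_graph_def by blast
qed

lemma sublinear_zero_nonneg:
  assumes "sublinear p" shows "0 \<le> p 0"
proof -
  have "p ((2::real) *\<^sub>R 0) \<le> 2 * p 0"
    using assms unfolding sublinear_def by (metis zero_less_numeral)
  then show ?thesis by simp
qed

lemma dominated_graph_extension_bounds:
  assumes p: "sublinear p" and G: "dominated_graph p G"
  obtains c where "\<And>m y. (m, y) \<in> G \<Longrightarrow> y - p (m - x0) \<le> c"
    "\<And>m y. (m, y) \<in> G \<Longrightarrow> c \<le> p (m + x0) - y"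
proof -
  have sub: "subspace G" and le: "\<And>m y. (m, y) \<in> G \<Longrightarrow> y \<le> p m"
    using G unfolding dominated_graph_def by auto
  have psub: "p (x + y) \<le> p x + p y" for x y
    using p unfolding sublinear_def by blast
  have compatible: "y1 - p (m1 - x0) \<le> p (m2 + x0) - y2" if "(m1, y1) \<in> G" "(m2, y2) \<in> G"
    for m1 y1 m2 y2
  proof -
    have "y1 + y2 \<le> p (m1 + m2)" using le subspace_add[OF sub that] by simp
    also have "\<dots> \<le> p (m1 - x0) + p (m2 + x0)" using psub[of "m1 - x0" "m2 + x0"] by simp
    finally show ?thesis by simp
  qed
  define c where "c = (SUP (m, y)\<in>G. y - p (m - x0))"
  have G0: "(0, 0) \<in> G" using subspace_0[OF sub] by (simp add: zero_prod_def)
  have "y - p (m - x0) \<le> c" and "c \<le> p (m + x0) - y" if "(m, y) \<in> G" for m y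
  proof -
    have "bdd_above ((\<lambda>(m, y). y - p (m - x0)) ` G)"
      by (rule bdd_aboveI2[where M = "p x0"]) (use compatible[OF _ G0] in auto)
    from cSUP_upper[OF that this] show "y - p (m - x0) \<le> c"
      unfolding c_def by simp
    have "G \<noteq> {}" using G0 by blast
    then show "c \<le> p (m + x0) - y"
      unfolding c_def by (rule cSUP_least) (use compatible[OF _ that] in auto)
  qed
  then show ?thesis using that by blast
qed

lemma dominated_graph_extension_constant:
  assumes p: "sublinear p" and G: "dominated_graph p G"
  obtains c where "\<And>m y t. (m, y) \<in> G \<Longrightarrow> y + t * c \<le> p (m + t *\<^sub>R x0)"
proof -
  obtain c where below: "\<And>m y. (m, y) \<in> G \<Longrightarrow> y - p (m - x0) \<le> c"
    and above: "\<And>m y. (m, y) \<in> G \<Longrightarrow> c \<le> p (m + x0) - y"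
    using dominated_graph_extension_bounds[OF p G] by blast
  have sub: "subspace G" and le: "\<And>m y. (m, y) \<in> G \<Longrightarrow> y \<le> p m"
    using G unfolding dominated_graph_def by auto
  have phom: "r > 0 \<Longrightarrow> p (r *\<^sub>R x) \<le> r * p x" for x r
    using p unfolding sublinear_def by auto
  have "y + t * c \<le> p (m + t *\<^sub>R x0)" if my: "(m, y) \<in> G" for m y t
  proof (cases t "0::real" rule: linorder_cases)
    case less
    have "(inverse (- t) *\<^sub>R m, inverse (- t) * y) \<in> G"
      using subspace_scale[OF sub my, of "inverse (- t)"] by simp
    then have "inverse (- t) * y - p (inverse (- t) *\<^sub>R m - x0) \<le> c" by (rule below)
    moreover have "inverse (- t) *\<^sub>R (m + t *\<^sub>R x0) = inverse (- t) *\<^sub>R m - x0"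
      using less by (simp add: algebra_simps)
    then have "p (inverse (- t) *\<^sub>R m - x0) \<le> inverse (- t) * p (m + t *\<^sub>R x0)"
      using phom[of "inverse (- t)" "m + t *\<^sub>R x0"] less by simp
    ultimately have "inverse (- t) * (y + t * c) \<le> inverse (- t) * p (m + t *\<^sub>R x0)"
      using less by (simp add: algebra_simps)
    then show ?thesis using less by simp
  next
    case equal
    then show ?thesis using le[OF my] by simp
  next
    case greater
    have "(inverse t *\<^sub>R m, inverse t * y) \<in> G"
      using subspace_scale[OF sub my, of "inverse t"] by simp
    then have "c \<le> p (inverse t *\<^sub>R m + x0) - inverse t * y" by (rule above)
    moreover have "inverse t *\<^sub>R (m + t *\<^sub>R x0) = inverse t *\<^sub>R m + x0"
      using greater by (simp add: algebra_simps)
    then have "p (inverse t *\<^sub>R m + x0) \<le> inverse t * p (m + t *\<^sub>R x0)"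
      using phom[of "inverse t" "m + t *\<^sub>R x0"] greater by simp
    ultimately have "inverse t * (y + t * c) \<le> inverse t * p (m + t *\<^sub>R x0)"
      using greater by (simp add: algebra_simps)
    then show ?thesis using greater by simp
  qed
  then show ?thesis using that by blast
qed

lemma mem_span_insert_subspace:
  fixes G :: "('v::real_vector \<times> real) set"
  assumes "subspace G"
  shows "(x, y) \<in> span (insert (x0, c) G) \<longleftrightarrow> (\<exists>t. (x - t *\<^sub>R x0, y - t * c) \<in> G)"
proof -
  have span_G: "span G = G" using assms by simp
  show ?thesis unfolding span_breakdown_eq span_G by simp
qed

lemma single_valued_span_insert:
  fixes G :: "('v::real_vector \<times> real) set"
  assumes sub: "subspace G" and sv: "single_valued G" and x0: "x0 \<notin> Domain G"
  shows "single_valued (span (insert (x0, c) G))"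
proof (rule single_valuedI)
  fix x y z assume "(x, y) \<in> span (insert (x0, c) G)" "(x, z) \<in> span (insert (x0, c) G)"
  then obtain s t where s: "(x - s *\<^sub>R x0, y - s * c) \<in> G" and t: "(x - t *\<^sub>R x0, z - t * c) \<in> G"
    unfolding mem_span_insert_subspace[OF sub] by blast
  have "(x - t *\<^sub>R x0, z - t * c) - (x - s *\<^sub>R x0, y - s * c) \<in> G"
    using subspace_diff[OF sub t s] .
  then have diff: "((s - t) *\<^sub>R x0, (z - t * c) - (y - s * c)) \<in> G"
    by (simp add: algebra_simps)
  \<comment> \<open>If the coefficients of x0 differed, x0 would lie in the domain of G.\<close>
  have "s = t"
  proof (rule ccontr)
    assume "s \<noteq> t"
    have "inverse (s - t) *\<^sub>R ((s - t) *\<^sub>R x0, (z - t * c) - (y - s * c)) \<in> G"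
      using subspace_scale[OF sub diff] .
    then have "(x0, inverse (s - t) * ((z - t * c) - (y - s * c))) \<in> G"
      using \<open>s \<noteq> t\<close> by simp
    then show False using x0 by blast
  qed
  then have "y - s * c = z - s * c" using single_valuedD[OF sv s] t by blast
  then show "y = z" by simp
qed

lemma dominated_graph_extend:
  assumes p: "sublinear p" and G: "dominated_graph p G" and x0: "x0 \<notin> Domain G"
  obtains G' where "dominated_graph p G'" "G \<subset> G'"
proof -
  obtain c where c: "\<And>m y t. (m, y) \<in> G \<Longrightarrow> y + t * c \<le> p (m + t *\<^sub>R x0)"
    using dominated_graph_extension_constant[OF p G] by blast
  have sub: "subspace G" and sv: "single_valued G"
    using G unfolding dominated_graph_def by auto
  define G' where "G' = span (insert (x0, c) G)"
  have "\<forall>(x, y)\<in>G'. y \<le> p x"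
  proof clarify
    fix x y assume "(x, y) \<in> G'"
    then obtain t where "(x - t *\<^sub>R x0, y - t * c) \<in> G"
      unfolding G'_def mem_span_insert_subspace[OF sub] by blast
    from c[OF this, of t] show "y \<le> p x" by simp
  qed
  then have "dominated_graph p G'"
    unfolding dominated_graph_def G'_def using single_valued_span_insert[OF sub sv x0] by simp
  moreover have "G \<subset> G'"
  proof -
    have "G \<subseteq> G'" "(x0, c) \<in> G'" unfolding G'_def by (auto intro: span_base)
    moreover have "(x0, c) \<notin> G" using x0 by blast
    ultimately show ?thesis by blast
  qed
  ultimately show ?thesis using that by blast
qed

lemma maximal_dominated_graph_exists:
  assumes p: "sublinear p"
  obtains M where "dominated_graph p M" "\<And>G. dominated_graph p G \<Longrightarrow> M \<subseteq> G \<Longrightarrow> G = M"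
proof -
  have "\<forall>(x, y)\<in>{0}. y \<le> p x"
    using sublinear_zero_nonneg[OF p] by (simp add: zero_prod_def)
  moreover have "single_valued {0 :: 'a \<times> real}"
    by (simp add: single_valued_def zero_prod_def)
  ultimately have "dominated_graph p {0}"
    unfolding dominated_graph_def by simp
  then have "\<exists>U\<in>{G. dominated_graph p G}. \<forall>X\<in>C. X \<subseteq> U"
    if "C \<in> chains {G. dominated_graph p G}" for C
    using dominated_graph_Union_chain[OF that] by (cases "C = {}") blast+
  then obtain M where "M \<in> {G. dominated_graph p G}"
    and "\<forall>G\<in>{G. dominated_graph p G}. M \<subseteq> G \<longrightarrow> G = M"
    using Zorn_Lemma2[of "{G. dominated_graph p G}"] by blast
  then show ?thesis using that by blast
qed

theorem hahn_banach_sublinear: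
  assumes p: "sublinear p"
  obtains l where "linear l" "\<And>x. l x \<le> p x"
proof -
  obtain M where M: "dominated_graph p M"
    and maximal: "\<And>G. dominated_graph p G \<Longrightarrow> M \<subseteq> G \<Longrightarrow> G = M"
    using maximal_dominated_graph_exists[OF p] by blast
  have total: "x \<in> Domain M" for x
  proof (rule ccontr)
    assume "x \<notin> Domain M"
    then obtain G where "dominated_graph p G" "M \<subset> G"
      using dominated_graph_extend[OF p M] by blast
    then show False using maximal by blast
  qed
  have sub: "subspace M" and sv: "single_valued M"
    using M unfolding dominated_graph_def by auto
  define l where "l x = (THE y. (x, y) \<in> M)" for x
  have graph: "(x, y) \<in> M \<longleftrightarrow> y = l x" for x y
  proof -
    obtain y' where "(x, y') \<in> M" using total by blast
    then show ?thesis
      unfolding l_def using sv by (metis single_valuedD the_equality)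
  qed
  have "linear l"
  proof (rule linearI)
    show "l (x + y) = l x + l y" for x y
      using subspace_add[OF sub, of "(x, l x)" "(y, l y)"] graph by simp
    show "l (r *\<^sub>R x) = r *\<^sub>R l x" for r x
      using subspace_scale[OF sub, of "(x, l x)" r] graph by simp
  qed
  moreover have "l x \<le> p x" for x
    using M graph unfolding dominated_graph_def by blast
  ultimately show ?thesis using that by blast
qed

section \<open>Separation by functionals below a seminorm\<close>

instantiation "fun" :: (type, real_vector) real_vector
begin
definition scaleR_fun :: "real \<Rightarrow> ('a \<Rightarrow> 'b) \<Rightarrow> 'a \<Rightarrow> 'b" where
  "scaleR_fun r f = (\<lambda>x. r *\<^sub>R f x)"
instance by standard (auto simp: scaleR_fun_def fun_eq_iff scaleR_add_right scaleR_add_left)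
end

lemma scaleR_fun_apply [simp]: "(r *\<^sub>R f) x = r *\<^sub>R f x"
  by (simp add: scaleR_fun_def)

definition seminorm :: "('v::real_vector \<Rightarrow> real) \<Rightarrow> bool" where
  "seminorm N \<longleftrightarrow> (\<forall>x y. N (x + y) \<le> N x + N y) \<and> (\<forall>r x. N (r *\<^sub>R x) = \<bar>r\<bar> * N x)"

lemma seminorm_triangle: "seminorm N \<Longrightarrow> N (x + y) \<le> N x + N y"
  and seminorm_scaleR: "seminorm N \<Longrightarrow> N (r *\<^sub>R x) = \<bar>r\<bar> * N x"
  unfolding seminorm_def by blast+

lemma seminorm_zero: "seminorm N \<Longrightarrow> N 0 = 0"
  using seminorm_scaleR[of N 0 0] by simp

lemma seminorm_minus: "seminorm N \<Longrightarrow> N (- x) = N x"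
  using seminorm_scaleR[of N "-1" x] by simp

lemma seminorm_reverse_triangle: "seminorm N \<Longrightarrow> N w - N v \<le> N (v - w)"
  using seminorm_triangle[of N v "- (v - w)"] seminorm_minus[of N "v - w"] by simp

lemma seminorm_sum_norm: "seminorm (\<lambda>v. \<Sum>i\<in>I. norm (v i))"
  unfolding seminorm_def
  by (auto simp: sum_distrib_left sum.distrib[symmetric] norm_triangle_ineq intro: sum_mono)

lemma seminorm_scaled_norm: "0 \<le> \<beta> \<Longrightarrow> seminorm (\<lambda>v. \<beta> * norm v)"
  unfolding seminorm_def
  by (auto simp: distrib_left[symmetric] intro: mult_left_mono norm_triangle_ineq)

text \<open>A pair (w, r) in W encodes the constraint l w \<le> r. The dominating sublinear functional
  is the infimal convolution v \<mapsto> inf {N (v - w) + r | (w, r) \<in> W}.\<close>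

lemma bdd_below_constraint_values:
  assumes N: "seminorm N" and W_bound: "\<And>w r. (w, r) \<in> W \<Longrightarrow> 0 \<le> N w + r"
  shows "bdd_below ((\<lambda>(w, r). N (v - w) + r) ` W)"
proof (rule bdd_belowI2[where m = "- N v"])
  fix wr assume "wr \<in> W"
  moreover obtain w r where "wr = (w, r)" by (cases wr)
  ultimately show "- N v \<le> (case wr of (w, r) \<Rightarrow> N (v - w) + r)"
    using W_bound seminorm_reverse_triangle[OF N, of w v] by fastforce
qed

lemma sublinear_INF_convex_cone:
  assumes N: "seminorm N" and W: "convex_cone W" and W_bound: "\<And>w r. (w, r) \<in> W \<Longrightarrow> 0 \<le> N w + r"
  shows "sublinear (\<lambda>v. INF (w, r)\<in>W. N (v - w) + r)"
proof -
  define p where "p v = (INF (w, r)\<in>W. N (v - w) + r)" for v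
  have upper: "p v \<le> N (v - w) + r" if "(w, r) \<in> W" for v w r
    unfolding p_def using cINF_lower[OF bdd_below_constraint_values[OF N W_bound, where v = v] that] by simp
  have nonempty: "W \<noteq> {}" using W by (simp add: convex_cone_nonempty)
  have greatest: "z \<le> p v" if "\<And>w r. (w, r) \<in> W \<Longrightarrow> z \<le> N (v - w) + r" for z v
    unfolding p_def using nonempty that by (auto intro!: cINF_greatest)
  have "p (x + y) \<le> p x + p y" for x y
  proof -
    have "p (x + y) - (N (y - w2) + r2) \<le> p x" if w2: "(w2, r2) \<in> W" for w2 r2
    proof (rule greatest)
      fix w1 r1 assume w1: "(w1, r1) \<in> W"
      have "p (x + y) \<le> N (x + y - (w1 + w2)) + (r1 + r2)"
        using upper convex_cone_add[OF W w1 w2] by simp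
      also have "\<dots> \<le> N (x - w1) + r1 + (N (y - w2) + r2)"
        using seminorm_triangle[OF N, of "x - w1" "y - w2"] by (simp add: algebra_simps)
      finally show "p (x + y) - (N (y - w2) + r2) \<le> N (x - w1) + r1" by simp
    qed
    then have "p (x + y) - p x \<le> p y"
      by (intro greatest) (simp add: algebra_simps)
    then show ?thesis by simp
  qed
  moreover have "p (t *\<^sub>R x) \<le> t * p x" if t: "0 < t" for t x
  proof -
    have "p (t *\<^sub>R x) / t \<le> p x"
    proof (rule greatest)
      fix w r assume wr: "(w, r) \<in> W"
      have "p (t *\<^sub>R x) \<le> N (t *\<^sub>R x - t *\<^sub>R w) + t * r"
        using upper convex_cone_scaleR[OF W _ wr, of t] t by simp
      also have "\<dots> = t * (N (x - w) + r)"
        using seminorm_scaleR[OF N, of t "x - w"] t by (simp add: algebra_simps)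
      finally show "p (t *\<^sub>R x) / t \<le> N (x - w) + r"
        using t by (simp add: field_simps)
    qed
    then show ?thesis using t by (simp add: field_simps)
  qed
  ultimately show ?thesis unfolding sublinear_def p_def by blast
qed

theorem hahn_banach_convex_cone:
  assumes N: "seminorm N" and W: "convex_cone W" and W_bound: "\<And>w r. (w, r) \<in> W \<Longrightarrow> 0 \<le> N w + r"
  obtains l where "linear l" "\<And>x. l x \<le> N x" "\<And>w r. (w, r) \<in> W \<Longrightarrow> l w \<le> r"
proof -
  obtain l where l: "linear l" "\<And>x. l x \<le> (INF (w, r)\<in>W. N (x - w) + r)"
    using hahn_banach_sublinear[OF sublinear_INF_convex_cone[OF N W W_bound]] by blast
  have l_le: "l x \<le> N (x - w) + r" if "(w, r) \<in> W" for x w r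
    using l(2)[of x] cINF_lower[OF bdd_below_constraint_values[OF N W_bound, where v = x] that] by simp
  have "(0, 0) \<in> W"
    using convex_cone_contains_0[OF W] by (simp add: zero_prod_def)
  then have "l x \<le> N x" for x
    using l_le[of 0 0 x] by simp
  moreover have "l w \<le> r" if "(w, r) \<in> W" for w r
    using l_le[OF that, of w] seminorm_zero[OF N] by simp
  ultimately show ?thesis using that l(1) by blast
qed

corollary seminorm_separation:
  assumes N: "seminorm N" and K: "convex K" "K \<noteq> {}" and far: "\<And>k. k \<in> K \<Longrightarrow> \<delta> \<le> N k"
  obtains l where "linear l" "\<And>x. l x \<le> N x" "\<And>k. k \<in> K \<Longrightarrow> l k \<le> - \<delta>"
proof -
  define W where "W = conic hull (K \<times> {- \<delta>})"
  have "convex_cone W"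
    unfolding W_def convex_cone_def using K
    by (simp add: conic_hull_eq_empty convex_conic_hull convex_Times conic_conic_hull)
  moreover have "0 \<le> N w + r" if "(w, r) \<in> W" for w r
  proof -
    obtain t k where t: "0 \<le> t" and k: "k \<in> K" and wr: "w = t *\<^sub>R k" "r = - (t * \<delta>)"
      using \<open>(w, r) \<in> W\<close> unfolding W_def conic_hull_explicit by auto
    have "N w + r = t * (N k - \<delta>)"
      unfolding wr using seminorm_scaleR[OF N, of t k] t by (simp add: algebra_simps)
    then show ?thesis using t far[OF k] by simp
  qed
  ultimately obtain l where l: "linear l" "\<And>x. l x \<le> N x" "\<And>w r. (w, r) \<in> W \<Longrightarrow> l w \<le> r"
    using hahn_banach_convex_cone[OF N] by blast
  have "l k \<le> - \<delta>" if "k \<in> K" for k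
    using l(3)[of k "- \<delta>"] that unfolding W_def by (simp add: hull_inc)
  then show ?thesis using that l(1,2) by blast
qed

corollary seminorm_cone_majorant:
  assumes N: "seminorm N" and Q: "convex_cone Q" and h: "linear h" and le: "\<And>c. c \<in> Q \<Longrightarrow> h c \<le> N c"
  obtains l where "linear l" "\<And>x. l x \<le> N x" "\<And>c. c \<in> Q \<Longrightarrow> h c \<le> l c"
proof -
  have "linear (\<lambda>c. (- c, - h c))"
    using h by (intro linearI) (auto simp: linear_add linear_scale)
  then have "convex_cone ((\<lambda>c. (- c, - h c)) ` Q)"
    using Q by (simp add: convex_cone_linear_image)
  moreover have "0 \<le> N w + r" if "(w, r) \<in> (\<lambda>c. (- c, - h c)) ` Q" for w r
    using that le seminorm_minus[OF N] by auto
  ultimately obtain l where l: "linear l" "\<And>x. l x \<le> N x"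
    and below: "\<And>w r. (w, r) \<in> (\<lambda>c. (- c, - h c)) ` Q \<Longrightarrow> l w \<le> r"
    using hahn_banach_convex_cone[OF N] by blast
  have "h c \<le> l c" if "c \<in> Q" for c
  proof -
    have "(- c, - h c) \<in> (\<lambda>c. (- c, - h c)) ` Q" using that by (rule rev_image_eqI) simp
    then have "l (- c) \<le> - h c" by (rule below)
    then show ?thesis using linear_neg[OF l(1), of c] by simp
  qed
  then show ?thesis using that l by blast
qed

lemma sum_fun_apply: "(\<Sum>i\<in>I. f i) x = (\<Sum>i\<in>I. f i x)"
  by (induction I rule: infinite_finite_induct) auto

lemma linear_finite_support_decompose:
  assumes l: "linear l" and I: "finite I" and supp: "\<And>i. i \<notin> I \<Longrightarrow> v i = 0"
  shows "l v = (\<Sum>i\<in>I. l (0(i := v i)))"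
proof -
  have "(\<Sum>i\<in>I. 0(i := v i)) j = v j" for j
  proof -
    have "(\<Sum>i\<in>I. 0(i := v i)) j = (\<Sum>i\<in>I. if i = j then v j else 0)"
      unfolding sum_fun_apply by (rule sum.cong) auto
    also have "\<dots> = v j" using I supp by (cases "j \<in> I") auto
    finally show ?thesis .
  qed
  then have "l v = l (\<Sum>i\<in>I. 0(i := v i))" by (metis ext)
  then show ?thesis by (simp add: linear_sum[OF l] o_def)
qed

lemma real_linear_complex_functional:
  fixes l :: "complex \<Rightarrow> real"
  assumes "linear l"
  shows "l z = Re (cnj (Complex (l 1) (l \<i>)) * z)"
proof -
  have "z = Re z *\<^sub>R 1 + Im z *\<^sub>R \<i>" by (simp add: complex_eq_iff)
  then have "l z = l (Re z *\<^sub>R 1 + Im z *\<^sub>R \<i>)" by simp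
  also have "\<dots> = Re z * l 1 + Im z * l \<i>"
    by (simp add: linear_add[OF assms] linear_scale[OF assms])
  finally show ?thesis by (simp add: algebra_simps)
qed

lemma coordinate_functional_linear:
  fixes l :: "('i \<Rightarrow> 'b::real_vector) \<Rightarrow> real"
  assumes "linear l"
  shows "linear (\<lambda>y. l (0(i := y)))"
proof (rule linearI)
  fix x y :: 'b and r :: real
  have "0(i := x + y) = 0(i := x) + 0(i := y)" "0(i := r *\<^sub>R x) = r *\<^sub>R 0(i := x)"
    by (simp_all add: fun_eq_iff)
  then show "l (0(i := x + y)) = l (0(i := x)) + l (0(i := y))"
    "l (0(i := r *\<^sub>R x)) = r *\<^sub>R l (0(i := x))"
    by (simp_all add: linear_add[OF assms] linear_scale[OF assms])
qed

lemma coordinate_functional_le_norm: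
  fixes l :: "('i \<Rightarrow> 'b::real_normed_vector) \<Rightarrow> real"
  assumes I: "finite I" and bound: "\<And>w. l w \<le> (\<Sum>j\<in>I. norm (w j))"
  shows "l (0(i := y)) \<le> norm y"
proof -
  have "(\<Sum>j\<in>I. norm ((0(i := y)) j)) = (\<Sum>j\<in>I. if j = i then norm y else 0)"
    by (rule sum.cong) auto
  also have "\<dots> \<le> norm y" using I by simp
  finally show ?thesis using bound[of "0(i := y)"] by simp
qed

lemma finite_coordinate_separation:
  fixes T :: "'a::real_vector \<Rightarrow> 'i \<Rightarrow> 'b::real_normed_vector"
  assumes I: "finite I" and C: "convex C" "C \<noteq> {}"
    and affine: "\<And>c1 c2 u v i. i \<in> I \<Longrightarrow> u + v = 1 \<Longrightarrow>
      T (u *\<^sub>R c1 + v *\<^sub>R c2) i = u *\<^sub>R T c1 i + v *\<^sub>R T c2 i"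
    and far: "\<And>c. c \<in> C \<Longrightarrow> \<exists>i\<in>I. \<delta> \<le> norm (T c i)"
  obtains \<mu> where "\<And>i. linear (\<mu> i)" "\<And>i y. \<mu> i y \<le> norm y"
    "\<And>c. c \<in> C \<Longrightarrow> (\<Sum>i\<in>I. \<mu> i (T c i)) \<le> - \<delta>"
proof -
  define R where "R c = (\<lambda>i. if i \<in> I then T c i else 0)" for c
  define N where "N w = (\<Sum>i\<in>I. norm (w i))" for w :: "'i \<Rightarrow> 'b"
  have N: "seminorm N"
    unfolding N_def by (rule seminorm_sum_norm)
  have "convex (R ` C)"
  proof (rule convexI)
    fix x y and u v :: real assume "x \<in> R ` C" "y \<in> R ` C" and uv: "0 \<le> u" "0 \<le> v" "u + v = 1"
    then obtain c1 c2 where c: "c1 \<in> C" "c2 \<in> C" "x = R c1" "y = R c2" by blast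
    have "u *\<^sub>R R c1 + v *\<^sub>R R c2 = R (u *\<^sub>R c1 + v *\<^sub>R c2)"
      using uv(3) affine by (simp add: R_def fun_eq_iff)
    moreover have "u *\<^sub>R c1 + v *\<^sub>R c2 \<in> C" using convexD[OF C(1) c(1,2) uv] .
    ultimately show "u *\<^sub>R x + v *\<^sub>R y \<in> R ` C" unfolding c by simp
  qed
  moreover have "\<delta> \<le> N k" if k: "k \<in> R ` C" for k
  proof -
    obtain c i where "c \<in> C" "k = R c" "i \<in> I" "\<delta> \<le> norm (T c i)"
      using k far by blast
    moreover have "norm (k i) \<le> N k"
      unfolding N_def by (rule member_le_sum) (use I \<open>i \<in> I\<close> in auto)
    ultimately show ?thesis by (simp add: R_def)
  qed
  ultimately obtain l where l: "linear l" "\<And>x. l x \<le> N x" "\<And>k. k \<in> R ` C \<Longrightarrow> l k \<le> - \<delta>"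
    using seminorm_separation[OF N] C(2) by blast
  have "(\<Sum>i\<in>I. l (0(i := T c i))) \<le> - \<delta>" if "c \<in> C" for c
  proof -
    have "l (R c) = (\<Sum>i\<in>I. l (0(i := T c i)))"
      by (subst linear_finite_support_decompose[OF l(1) I]) (auto simp: R_def)
    then show ?thesis using l(3)[OF imageI[OF that]] by simp
  qed
  moreover have "l (0(i := y)) \<le> norm y" for i y
    using coordinate_functional_le_norm[OF I l(2)[unfolded N_def]] .
  ultimately show ?thesis
    using that[of "\<lambda>i y. l (0(i := y))"] coordinate_functional_linear[OF l(1)] by blast
qed

section \<open>Functionals on A and on its bidual\<close>

abbreviation Adual :: "('a::real_normed_algebra \<Rightarrow> 'a) \<Rightarrow> ('a \<Rightarrow> complex) set" where
  "Adual J \<equiv> carr (dual (Aspace J))"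

abbreviation Abidual :: "('a::real_normed_algebra \<Rightarrow> 'a) \<Rightarrow> (('a \<Rightarrow> complex) \<Rightarrow> complex) set" where
  "Abidual J \<equiv> carr (dual (dual (Aspace J)))"

lemma complex_structureD:
  assumes "complex_structure J"
  shows "J (x + y) = J x + J y" "J (r *\<^sub>R x) = r *\<^sub>R J x" "J (J x) = - x"
    "J (x * y) = J x * y" "J (x * y) = x * J y" "norm (cscale J c x) = cmod c * norm x"
proof -
  have J: "linear J" "\<forall>x. J (J x) = - x" "\<forall>x y. J (x * y) = J x * y \<and> J (x * y) = x * J y"
    "\<forall>c x. norm (cscale J c x) = cmod c * norm x"
    using assms unfolding complex_structure_def by blast+
  show "J (x + y) = J x + J y" "J (r *\<^sub>R x) = r *\<^sub>R J x"
    using J(1) by (simp_all add: linear_add linear_scale)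
  show "J (J x) = - x" "norm (cscale J c x) = cmod c * norm x"
    using J(2,4) by blast+
  show "J (x * y) = J x * y" "J (x * y) = x * J y"
    using J(3) by blast+
qed

lemma cscale_mult_left:
  "complex_structure J \<Longrightarrow> cscale J c x * a = cscale J c (x * a)"
  unfolding cscale_def by (simp add: distrib_right complex_structureD(4))

lemma cscale_mult_right:
  "complex_structure J \<Longrightarrow> a * cscale J c x = cscale J c (a * x)"
  unfolding cscale_def by (simp add: distrib_left complex_structureD(5))

lemma cscale_of_real [simp]: "cscale J (complex_of_real r) x = r *\<^sub>R x"
  by (simp add: cscale_def)

lemma mem_dual_iff:
  "f \<in> carr (dual S) \<longleftrightarrow> (\<forall>x\<in>carr S. \<forall>y\<in>carr S. f (addv S x y) = f x + f y)
     \<and> (\<forall>c. \<forall>x\<in>carr S. f (smulv S c x) = c * f x)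
     \<and> (\<exists>K. \<forall>x\<in>carr S. cmod (f x) \<le> K * nrm S x) \<and> (\<forall>x. x \<notin> carr S \<longrightarrow> f x = 0)"
  by (simp add: dual_def)

lemma nrm_dual: "nrm (dual S) f = Sup {cmod (f x) | x. x \<in> carr S \<and> nrm S x \<le> 1}"
  by (simp add: dual_def)

lemma nrm_Adual: "nrm (dual (Aspace J)) f = Sup {cmod (f x) | x. norm x \<le> 1}"
  by (simp add: nrm_dual Aspace_def)

lemma mem_Adual_iff:
  "f \<in> Adual J \<longleftrightarrow> (\<forall>x y. f (x + y) = f x + f y)
     \<and> (\<forall>c x. f (cscale J c x) = c * f x) \<and> (\<exists>K. \<forall>x. cmod (f x) \<le> K * norm x)"
  by (simp add: mem_dual_iff Aspace_def)

lemma AdualI: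
  "(\<And>x y. f (x + y) = f x + f y) \<Longrightarrow> (\<And>c x. f (cscale J c x) = c * f x)
    \<Longrightarrow> (\<And>x. cmod (f x) \<le> K * norm x) \<Longrightarrow> f \<in> Adual J"
  unfolding mem_Adual_iff by blast

context
  fixes J :: "'a::real_normed_algebra \<Rightarrow> 'a" and f :: "'a \<Rightarrow> complex"
  assumes f: "f \<in> Adual J"
begin

lemma Adual_add: "f (x + y) = f x + f y"
  and Adual_cscale: "f (cscale J c x) = c * f x"
  using f unfolding mem_Adual_iff by blast+

lemma Adual_scaleR: "f (r *\<^sub>R x) = complex_of_real r * f x"
  using Adual_cscale[of "complex_of_real r" x] by simp

lemma Adual_zero: "f 0 = 0"
  using Adual_scaleR[of 0 0] by simp

lemma Adual_diff: "f (x - y) = f x - f y"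
  using Adual_add[of "x - y" y] by (simp add: algebra_simps)

lemma Adual_real_linear: "linear (\<lambda>x. Re (f x))"
  by (rule linearI) (simp_all add: Adual_add Adual_scaleR)

lemma Adual_norm_bdd: "bdd_above {cmod (f x) | x. norm x \<le> 1}"
proof -
  obtain K where K: "\<And>x. cmod (f x) \<le> K * norm x"
    using f unfolding mem_Adual_iff by blast
  have "cmod (f x) \<le> \<bar>K\<bar>" if "norm x \<le> 1" for x
    using K[of x] mult_mono[OF abs_ge_self that] by (smt (verit) norm_ge_zero)
  then show ?thesis by (intro bdd_aboveI[where M = "\<bar>K\<bar>"]) auto
qed

lemma Adual_norm_upper: "norm x \<le> 1 \<Longrightarrow> cmod (f x) \<le> nrm (dual (Aspace J)) f"
  unfolding nrm_Adual by (rule cSup_upper[OF _ Adual_norm_bdd]) auto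

lemma Adual_norm_nonneg: "0 \<le> nrm (dual (Aspace J)) f"
  using Adual_norm_upper[of 0] Adual_zero by simp

lemma Adual_norm_bound: "cmod (f x) \<le> nrm (dual (Aspace J)) f * norm x"
proof (cases "x = 0")
  case True
  then show ?thesis by (simp add: Adual_zero)
next
  case False
  have "f x = complex_of_real (norm x) * f (inverse (norm x) *\<^sub>R x)"
    using False by (simp add: Adual_scaleR)
  then have "cmod (f x) = norm x * cmod (f (inverse (norm x) *\<^sub>R x))"
    by (simp add: norm_mult)
  also have "\<dots> \<le> norm x * nrm (dual (Aspace J)) f"
    using False by (intro mult_left_mono Adual_norm_upper) simp_all
  finally show ?thesis by (simp add: mult.commute)
qed

lemma Adual_mult_bound:
  "cmod (f (x * a)) \<le> (nrm (dual (Aspace J)) f * norm a) * norm x"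
  "cmod (f (a * x)) \<le> (nrm (dual (Aspace J)) f * norm a) * norm x"
proof -
  have "cmod (f (x * a)) \<le> nrm (dual (Aspace J)) f * norm (x * a)"
    "cmod (f (a * x)) \<le> nrm (dual (Aspace J)) f * norm (a * x)"
    by (rule Adual_norm_bound)+
  moreover have "norm (x * a) \<le> norm x * norm a" "norm (a * x) \<le> norm x * norm a"
    using norm_mult_ineq[of x a] norm_mult_ineq[of a x] by (simp_all add: mult.commute)
  ultimately show "cmod (f (x * a)) \<le> (nrm (dual (Aspace J)) f * norm a) * norm x"
    "cmod (f (a * x)) \<le> (nrm (dual (Aspace J)) f * norm a) * norm x"
    using mult_left_mono[OF _ Adual_norm_nonneg] by (smt (verit) mult.assoc mult.commute)+
qed

lemma Adual_mult_right: "complex_structure J \<Longrightarrow> (\<lambda>x. f (x * a)) \<in> Adual J"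
  by (rule AdualI[OF _ _ Adual_mult_bound(1)])
    (simp_all add: distrib_right Adual_add Adual_cscale cscale_mult_left)

lemma Adual_mult_left: "complex_structure J \<Longrightarrow> (\<lambda>x. f (a * x)) \<in> Adual J"
  by (rule AdualI[OF _ _ Adual_mult_bound(2)])
    (simp_all add: distrib_left Adual_add Adual_cscale cscale_mult_right)

end

lemma Adual_norm_le:
  assumes "\<And>x. cmod (f x) \<le> M * norm x" "0 \<le> M"
  shows "nrm (dual (Aspace J)) f \<le> M"
  unfolding nrm_Adual
proof (rule cSup_least)
  have "cmod (f 0) \<in> {cmod (f x) |x. norm x \<le> 1}" by fastforce
  then show "{cmod (f x) |x. norm x \<le> 1} \<noteq> {}" by blast
next
  fix y assume "y \<in> {cmod (f x) |x. norm x \<le> 1}"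
  then obtain x where "norm x \<le> 1" "y = cmod (f x)" by blast
  then show "y \<le> M" using assms(1)[of x] mult_left_mono[of "norm x" 1 M] assms(2) by simp
qed

lemma Adual_add_fun: "f \<in> Adual J \<Longrightarrow> g \<in> Adual J \<Longrightarrow> (\<lambda>x. f x + g x) \<in> Adual J"
proof (rule AdualI)
  assume f: "f \<in> Adual J" and g: "g \<in> Adual J"
  show "f (x + y) + g (x + y) = f x + g x + (f y + g y)" for x y
    by (simp add: Adual_add[OF f] Adual_add[OF g])
  show "f (cscale J c x) + g (cscale J c x) = c * (f x + g x)" for c x
    by (simp add: Adual_cscale[OF f] Adual_cscale[OF g] distrib_left)
  show "cmod (f x + g x) \<le> (nrm (dual (Aspace J)) f + nrm (dual (Aspace J)) g) * norm x" for x
    using norm_triangle_ineq[of "f x" "g x"] Adual_norm_bound[OF f, of x] Adual_norm_bound[OF g, of x]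
    by (simp add: distrib_right)
qed

lemma Adual_scale_fun: "f \<in> Adual J \<Longrightarrow> (\<lambda>x. c * f x) \<in> Adual J"
proof (rule AdualI)
  assume f: "f \<in> Adual J"
  show "c * f (x + y) = c * f x + c * f y" for x y
    by (simp add: Adual_add[OF f] distrib_left)
  show "c * f (cscale J d x) = d * (c * f x)" for d x
    by (simp add: Adual_cscale[OF f])
  show "cmod (c * f x) \<le> (cmod c * nrm (dual (Aspace J)) f) * norm x" for x
    using mult_left_mono[OF Adual_norm_bound[OF f, of x] norm_ge_zero[of c]]
    by (simp add: norm_mult mult.assoc)
qed

lemma mem_Abidual_iff:
  "\<Phi> \<in> Abidual J \<longleftrightarrow>
     (\<forall>f\<in>Adual J. \<forall>g\<in>Adual J. \<Phi> (\<lambda>x. f x + g x) = \<Phi> f + \<Phi> g)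
   \<and> (\<forall>c. \<forall>f\<in>Adual J. \<Phi> (\<lambda>x. c * f x) = c * \<Phi> f)
   \<and> (\<exists>K. \<forall>f\<in>Adual J. cmod (\<Phi> f) \<le> K * nrm (dual (Aspace J)) f)
   \<and> (\<forall>f. f \<notin> Adual J \<longrightarrow> \<Phi> f = 0)"
  by (subst mem_dual_iff) (simp add: dual_def)

context
  fixes J :: "'a::real_normed_algebra \<Rightarrow> 'a" and \<Phi> :: "('a \<Rightarrow> complex) \<Rightarrow> complex"
  assumes \<Phi>: "\<Phi> \<in> Abidual J"
begin

lemma Abidual_add: "f \<in> Adual J \<Longrightarrow> g \<in> Adual J \<Longrightarrow> \<Phi> (\<lambda>x. f x + g x) = \<Phi> f + \<Phi> g"
  and Abidual_scale: "f \<in> Adual J \<Longrightarrow> \<Phi> (\<lambda>x. c * f x) = c * \<Phi> f"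
  using \<Phi> unfolding mem_Abidual_iff by blast+

lemma Abidual_diff: "f \<in> Adual J \<Longrightarrow> g \<in> Adual J \<Longrightarrow> \<Phi> (\<lambda>x. f x - g x) = \<Phi> f - \<Phi> g"
  using Abidual_add[of f "\<lambda>x. (- 1) * g x"] Abidual_scale[of g "- 1"] Adual_scale_fun[of g J "- 1"]
  by simp

lemma Abidual_sum:
  assumes "finite F" "F \<subseteq> Adual J"
  shows "(\<lambda>x. \<Sum>f\<in>F. w f * f x) \<in> Adual J \<and> \<Phi> (\<lambda>x. \<Sum>f\<in>F. w f * f x) = (\<Sum>f\<in>F. w f * \<Phi> f)"
  using assms
proof (induction F rule: finite_induct)
  case empty
  have "(\<lambda>x. 0) \<in> Adual J" by (rule AdualI[where K = 0]) simp_all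
  then show ?case using Abidual_scale[of "\<lambda>x. 0" 0] by simp
next
  case (insert f F)
  have f: "f \<in> Adual J" and IH: "(\<lambda>x. \<Sum>f\<in>F. w f * f x) \<in> Adual J"
    "\<Phi> (\<lambda>x. \<Sum>f\<in>F. w f * f x) = (\<Sum>f\<in>F. w f * \<Phi> f)"
    using insert by auto
  have wf: "(\<lambda>x. w f * f x) \<in> Adual J" by (rule Adual_scale_fun[OF f])
  show ?case
    using Adual_add_fun[OF wf IH(1)] Abidual_add[OF wf IH(1)] Abidual_scale[OF f] IH(2) insert.hyps
    by simp
qed

lemma Abidual_norm_upper:
  assumes "f \<in> Adual J" "nrm (dual (Aspace J)) f \<le> 1"
  shows "cmod (\<Phi> f) \<le> nrm (dual (dual (Aspace J))) \<Phi>"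
proof -
  obtain K where K: "\<And>g. g \<in> Adual J \<Longrightarrow> cmod (\<Phi> g) \<le> K * nrm (dual (Aspace J)) g"
    using \<Phi> unfolding mem_Abidual_iff by blast
  have "cmod (\<Phi> g) \<le> \<bar>K\<bar>" if "g \<in> Adual J" "nrm (dual (Aspace J)) g \<le> 1" for g
    using K[OF that(1)] mult_mono[OF abs_ge_self that(2) _ Adual_norm_nonneg[OF that(1)]]
    by (smt (verit))
  then have bdd: "bdd_above {cmod (\<Phi> g) |g. g \<in> Adual J \<and> nrm (dual (Aspace J)) g \<le> 1}"
    by (intro bdd_aboveI[where M = "\<bar>K\<bar>"]) auto
  show ?thesis
    unfolding nrm_dual[of "dual (Aspace J)"] by (rule cSup_upper[OF _ bdd]) (use assms in auto)
qed

lemma Abidual_apply_le: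
  assumes f: "f \<in> Adual J" and bound: "\<And>x. cmod (f x) \<le> M * norm x" and M: "0 \<le> M"
  shows "cmod (\<Phi> f) \<le> nrm (dual (dual (Aspace J))) \<Phi> * M"
proof (cases "M = 0")
  case True
  then have "f = (\<lambda>x. 0 * f x)" using bound by (simp add: fun_eq_iff)
  then show ?thesis using Abidual_scale[OF f, of 0] True by simp
next
  case False
  define g where "g x = complex_of_real (inverse M) * f x" for x
  have g: "g \<in> Adual J" unfolding g_def by (rule Adual_scale_fun[OF f])
  have "cmod (g x) \<le> 1 * norm x" for x
  proof -
    have "cmod (g x) = inverse M * cmod (f x)" using M by (simp add: g_def norm_mult norm_inverse)
    also have "\<dots> \<le> inverse M * (M * norm x)" by (rule mult_left_mono[OF bound]) (use M in simp)
    also have "\<dots> = 1 * norm x" using False by simp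
    finally show ?thesis .
  qed
  then have "cmod (\<Phi> g) \<le> nrm (dual (dual (Aspace J))) \<Phi>"
    using Abidual_norm_upper[OF g] Adual_norm_le[of g 1] by simp
  moreover have "f = (\<lambda>x. complex_of_real M * g x)" using False by (simp add: g_def fun_eq_iff)
  then have "\<Phi> f = complex_of_real M * \<Phi> g" using Abidual_scale[OF g] by simp
  ultimately show ?thesis using M by (simp add: norm_mult mult.commute mult_left_mono)
qed

end

text \<open>A bidual element acting on a bounded complex-linear family of functionals yields a
  functional; this is the module action of A** on A* behind the Arens products.\<close>

lemma Abidual_apply_family:
  assumes \<Phi>: "\<Phi> \<in> Abidual J" and F: "\<And>x. F x \<in> Adual J"
    and add: "\<And>x y. F (x + y) = (\<lambda>b. F x b + F y b)"
    and hom: "\<And>c x. F (cscale J c x) = (\<lambda>b. c * F x b)"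
    and bound: "\<And>x b. cmod (F x b) \<le> (K * norm x) * norm b" and K: "0 \<le> K"
  shows "(\<lambda>x. \<Phi> (F x)) \<in> Adual J"
proof (rule AdualI)
  show "\<Phi> (F (x + y)) = \<Phi> (F x) + \<Phi> (F y)" for x y
    unfolding add by (rule Abidual_add[OF \<Phi> F F])
  show "\<Phi> (F (cscale J c x)) = c * \<Phi> (F x)" for c x
    unfolding hom by (rule Abidual_scale[OF \<Phi> F])
  show "cmod (\<Phi> (F x)) \<le> (nrm (dual (dual (Aspace J))) \<Phi> * K) * norm x" for x
    using Abidual_apply_le[OF \<Phi> F bound] K by (simp add: mult.assoc)
qed

lemma canon_Aspace: "f \<in> Adual J \<Longrightarrow> canon (Aspace J) a f = f a"
  by (simp add: canon_def)

lemma canon_mem_Abidual: "canon (Aspace J) a \<in> Abidual J"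
  unfolding mem_Abidual_iff
proof (intro conjI ballI allI impI)
  show "canon (Aspace J) a (\<lambda>x. f x + g x) = canon (Aspace J) a f + canon (Aspace J) a g"
    if "f \<in> Adual J" "g \<in> Adual J" for f g
    using that Adual_add_fun[OF that] by (simp add: canon_Aspace)
  show "canon (Aspace J) a (\<lambda>x. c * f x) = c * canon (Aspace J) a f" if "f \<in> Adual J" for c f
    using that Adual_scale_fun[OF that] by (simp add: canon_Aspace)
  show "\<exists>K. \<forall>f\<in>Adual J. cmod (canon (Aspace J) a f) \<le> K * nrm (dual (Aspace J)) f"
    using Adual_norm_bound by (auto simp: canon_Aspace mult.commute intro!: exI[of _ "norm a"])
  show "canon (Aspace J) a f = 0" if "f \<notin> Adual J" for f
    using that by (simp add: canon_def)
qed

lemma mixed_identity_apply: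
  assumes cs: "complex_structure J" and E: "mixed_identity J E" and f: "f \<in> Adual J"
  shows "E (\<lambda>b. f (b * a)) = f a" and "E (\<lambda>b. f (a * b)) = f a"
proof -
  have EA: "E \<in> Abidual J" using E by (simp add: mixed_identity_def)
  have right: "(\<lambda>x. E (\<lambda>b. f (b * x))) \<in> Adual J"
    by (rule Abidual_apply_family[where F = "\<lambda>x b. f (b * x)",
          OF EA Adual_mult_right[OF f cs] _ _ Adual_mult_bound(1)[OF f] Adual_norm_nonneg[OF f]])
      (simp_all add: fun_eq_iff distrib_left Adual_add[OF f] Adual_cscale[OF f] cscale_mult_right[OF cs])
  have "arens2 J E (canon (Aspace J) a) = canon (Aspace J) a"
    using E canon_mem_Abidual[of J a] unfolding mixed_identity_def by blast
  from fun_cong[OF this, of f] show "E (\<lambda>b. f (b * a)) = f a"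
    using f right by (simp add: arens2_def canon_Aspace)
  have left: "(\<lambda>x. E (\<lambda>b. f (x * b))) \<in> Adual J"
    by (rule Abidual_apply_family[where F = "\<lambda>x b. f (x * b)",
          OF EA Adual_mult_left[OF f cs] _ _ Adual_mult_bound(2)[OF f] Adual_norm_nonneg[OF f]])
      (simp_all add: fun_eq_iff distrib_right Adual_add[OF f] Adual_cscale[OF f] cscale_mult_left[OF cs])
  have "arens1 J (canon (Aspace J) a) E = canon (Aspace J) a"
    using E canon_mem_Abidual[of J a] unfolding mixed_identity_def by blast
  from fun_cong[OF this, of f] show "E (\<lambda>b. f (a * b)) = f a"
    using f left by (simp add: arens1_def canon_Aspace)
qed

section \<open>Complexification and the cone rA\<close>

lemma complexified_cscale:
  assumes cs: "complex_structure J" and l: "linear l"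
  shows "Complex (l (cscale J c x)) (- l (J (cscale J c x))) = c * Complex (l x) (- l (J x))"
proof -
  have "J (cscale J c x) = Re c *\<^sub>R J x - Im c *\<^sub>R x"
    unfolding cscale_def by (simp add: complex_structureD[OF cs])
  then have "l (J (cscale J c x)) = Re c * l (J x) - Im c * l x"
    by (simp add: linear_diff[OF l] linear_scale[OF l])
  moreover have "l (cscale J c x) = Re c * l x + Im c * l (J x)"
    unfolding cscale_def by (simp add: linear_add[OF l] linear_scale[OF l])
  ultimately show ?thesis
    unfolding complex_eq_iff by (simp add: algebra_simps)
qed

lemma complexified_norm_le:
  assumes cs: "complex_structure J" and l: "linear l" and bound: "\<And>x. l x \<le> M * norm x"
  shows "cmod (Complex (l x) (- l (J x))) \<le> M * norm x"
proof (cases "Complex (l x) (- l (J x)) = 0")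
  case True
  have "0 \<le> l x + l (- x)" using linear_neg[OF l, of x] by simp
  also have "\<dots> \<le> 2 * M * norm x" using bound[of x] bound[of "- x"] by simp
  finally show ?thesis using True by simp
next
  case False
  \<comment> \<open>Rotate x by the phase of w: then w becomes real and equal to a value of l.\<close>
  define w where "w = Complex (l x) (- l (J x))"
  define c where "c = cnj w / complex_of_real (cmod w)"
  have "cmod c = 1" using False by (simp add: c_def w_def norm_divide)
  have "cnj w * w = complex_of_real (cmod w) * complex_of_real (cmod w)"
    using complex_norm_square[of w] by (simp add: power2_eq_square mult.commute)
  then have "c * w = complex_of_real (cmod w)"
    using False by (simp add: c_def w_def)
  then have "cmod w = l (cscale J c x)"
    using complexified_cscale[OF cs l, of c x] unfolding w_def by (metis Re_complex_of_real complex.sel(1))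
  also have "\<dots> \<le> M * norm x"
    using bound[of "cscale J c x"] complex_structureD(6)[OF cs, of c x] \<open>cmod c = 1\<close> by simp
  finally show ?thesis unfolding w_def .
qed

lemma complexified_functional:
  assumes cs: "complex_structure J" and l: "linear l" and bound: "\<And>x. l x \<le> M * norm x"
  shows "(\<lambda>x. Complex (l x) (- l (J x))) \<in> Adual J"
proof (rule AdualI)
  show "Complex (l (x + y)) (- l (J (x + y))) = Complex (l x) (- l (J x)) + Complex (l y) (- l (J y))"
    for x y by (simp add: complex_eq_iff linear_add[OF l] complex_structureD(1)[OF cs])
  show "Complex (l (cscale J c x)) (- l (J (cscale J c x))) = c * Complex (l x) (- l (J x))" for c x
    by (rule complexified_cscale[OF cs l])
  show "cmod (Complex (l x) (- l (J x))) \<le> M * norm x" for x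
    by (rule complexified_norm_le[OF cs l bound])
qed

lemma rA_state_additive:
  assumes "\<phi> \<in> states (unitz J) (unitz_one TYPE('a::real_normed_algebra))"
  shows "\<phi> ((a::'a) + b, 0) = \<phi> (a, 0) + \<phi> (b, 0)"
    and "\<phi> (r *\<^sub>R a, 0) = complex_of_real r * \<phi> (a, 0)"
proof -
  have \<phi>: "\<phi> \<in> carr (dual (unitz J))" using assms by (simp add: states_def)
  have carr: "(x, 0) \<in> carr (unitz J)" for x :: 'a by (simp add: unitz_def)
  have "\<phi> (addv (unitz J) (a, 0) (b, 0)) = \<phi> (a, 0) + \<phi> (b, 0)"
    using \<phi> carr unfolding mem_dual_iff by blast
  then show "\<phi> (a + b, 0) = \<phi> (a, 0) + \<phi> (b, 0)" by (simp add: unitz_def)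
  have "\<phi> (smulv (unitz J) (complex_of_real r) (a, 0)) = complex_of_real r * \<phi> (a, 0)"
    using \<phi> carr unfolding mem_dual_iff by blast
  then show "\<phi> (r *\<^sub>R a, 0) = complex_of_real r * \<phi> (a, 0)" by (simp add: unitz_def)
qed

lemma convex_cone_rA: "convex_cone (rA J)"
  unfolding convex_cone_iff
proof (intro conjI ballI allI impI)
  show "0 \<in> rA J"
  proof (unfold rA_def, intro CollectI ballI)
    fix \<phi> assume "\<phi> \<in> states (unitz J) (unitz_one TYPE('a))"
    then have "\<phi> (0, 0) = 0" using rA_state_additive(2)[of \<phi> J 0 0] by simp
    then show "0 \<le> Re (\<phi> (0, 0))" by simp
  qed
  show "x + y \<in> rA J" if "x \<in> rA J" "y \<in> rA J" for x y
    using that unfolding rA_def by (simp add: rA_state_additive(1))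
  show "c *\<^sub>R x \<in> rA J" if "x \<in> rA J" "0 \<le> c" for x c
    using that unfolding rA_def by (simp add: rA_state_additive(2))
qed

lemma Re_le_scaled_norm_on_rA:
  assumes \<phi>: "\<phi> \<in> Adual J" and bound: "\<And>c. c \<in> rA J \<Longrightarrow> norm c \<le> 1 \<Longrightarrow> Re (\<phi> c) \<le> \<beta>"
    and c: "c \<in> rA J"
  shows "Re (\<phi> c) \<le> \<beta> * norm c"
proof (cases "c = 0")
  case True
  then show ?thesis by (simp add: Adual_zero[OF \<phi>])
next
  case False
  have "inverse (norm c) *\<^sub>R c \<in> rA J"
    using convex_cone_scaleR[OF convex_cone_rA _ c] by simp
  then have "Re (\<phi> (inverse (norm c) *\<^sub>R c)) \<le> \<beta>"
    using False by (intro bound) simp_all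
  then show ?thesis using False by (simp add: Adual_scaleR[OF \<phi>] field_simps)
qed

lemma rA_unit_ball_nonempty: "{x \<in> rA J. norm x \<le> 1} \<noteq> {}"
  using convex_cone_contains_0[OF convex_cone_rA[of J]] by force

lemma convex_rA_unit_ball: "convex {x \<in> rA J. norm x \<le> 1}"
proof -
  have "{x \<in> rA J. norm x \<le> 1} = rA J \<inter> cball 0 1" by auto
  then show ?thesis
    using convex_cone_rA[of J] by (simp add: convex_cone_def convex_Int)
qed

section \<open>Weak* density of the unit ball of rA\<close>

lemma wstar_dense_Re_nonpos:
  assumes dense: "wstar_dense (dual (Aspace J)) (canon (Aspace J) ` D) E" and \<eta>: "\<eta> \<in> E"
    and \<psi>: "\<psi> \<in> Adual J" and nonpos: "\<And>c. c \<in> D \<Longrightarrow> Re (\<psi> c) \<le> 0"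
  shows "Re (\<eta> \<psi>) \<le> 0"
proof (rule ccontr)
  assume "\<not> Re (\<eta> \<psi>) \<le> 0"
  then obtain c where c: "c \<in> D" and close: "cmod (\<psi> c - \<eta> \<psi>) < Re (\<eta> \<psi>)"
    using dense \<eta> \<psi> unfolding wstar_dense_def
    by (auto simp: canon_Aspace dest!: bspec[of _ _ \<eta>] spec[of _ "{\<psi>}"] spec[of _ "Re (\<eta> \<psi>)"])
  have "Re (\<eta> \<psi>) - Re (\<psi> c) \<le> cmod (\<psi> c - \<eta> \<psi>)"
    using complex_Re_le_cmod[of "\<eta> \<psi> - \<psi> c"] by (simp add: norm_minus_commute)
  then show False using close nonpos[OF c] by simp
qed

lemma Re_bidual_le_of_rA_unit_ball_bound:
  fixes J :: "'a::{real_normed_algebra, banach} \<Rightarrow> 'a"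
  assumes cs: "complex_structure J"
    and dense: "wstar_dense (dual (Aspace J)) (canon (Aspace J) ` rA J) (rAbidual J)"
    and \<phi>: "\<phi> \<in> Adual J" and bound: "\<And>c. c \<in> rA J \<Longrightarrow> norm c \<le> 1 \<Longrightarrow> Re (\<phi> c) \<le> \<beta>"
    and \<eta>: "\<eta> \<in> rAbidual J" "nrm (dual (dual (Aspace J))) \<eta> \<le> 1"
  shows "Re (\<eta> \<phi>) \<le> \<beta>"
proof -
  have \<eta>A: "\<eta> \<in> Abidual J" using \<eta>(1) by (simp add: rAbidual_def)
  have "0 \<in> rA J" using convex_cone_contains_0[OF convex_cone_rA[of J]] .
  then have \<beta>: "0 \<le> \<beta>" using bound[of 0] Adual_zero[OF \<phi>] by simp
  obtain l where l: "linear l" "\<And>x. l x \<le> \<beta> * norm x" "\<And>c. c \<in> rA J \<Longrightarrow> Re (\<phi> c) \<le> l c"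
    using seminorm_cone_majorant[OF seminorm_scaled_norm[OF \<beta>] convex_cone_rA Adual_real_linear[OF \<phi>]]
      Re_le_scaled_norm_on_rA[OF \<phi> bound] by blast
  define g where "g x = Complex (l x) (- l (J x))" for x
  have g: "g \<in> Adual J" "\<And>x. cmod (g x) \<le> \<beta> * norm x"
    unfolding g_def using complexified_functional[OF cs l(1,2)] complexified_norm_le[OF cs l(1,2)]
    by blast+
  have "Re (\<eta> (\<lambda>x. \<phi> x - g x)) \<le> 0"
  proof (rule wstar_dense_Re_nonpos[OF dense \<eta>(1)])
    show "(\<lambda>x. \<phi> x - g x) \<in> Adual J"
      using Adual_add_fun[OF \<phi> Adual_scale_fun[OF g(1), of "- 1"]] by simp
    show "Re (\<phi> c - g c) \<le> 0" if "c \<in> rA J" for c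
      using l(3)[OF that] by (simp add: g_def)
  qed
  moreover have "cmod (\<eta> g) \<le> \<beta>"
    using Abidual_apply_le[OF \<eta>A g \<beta>] \<eta>(2) mult_right_mono[OF \<eta>(2) \<beta>] by simp
  ultimately show ?thesis
    using Abidual_diff[OF \<eta>A \<phi> g(1)] complex_Re_le_cmod[of "\<eta> g"] by simp
qed

lemma Abidual_separation:
  assumes \<eta>: "\<eta> \<in> Abidual J" and F: "finite F" "F \<subseteq> Adual J" and C: "convex C" "C \<noteq> {}"
    and far: "\<And>c. c \<in> C \<Longrightarrow> \<exists>f\<in>F. \<epsilon> \<le> cmod (f c - \<eta> f)"
  obtains \<phi> where "\<phi> \<in> Adual J" "\<And>c. c \<in> C \<Longrightarrow> Re (\<phi> c) \<le> Re (\<eta> \<phi>) - \<epsilon>"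
proof -
  have FA: "f \<in> Adual J" if "f \<in> F" for f using F(2) that by blast
  have affine: "f (u *\<^sub>R c1 + v *\<^sub>R c2) - \<eta> f = u *\<^sub>R (f c1 - \<eta> f) + v *\<^sub>R (f c2 - \<eta> f)"
    if "f \<in> F" "u + v = 1" for c1 c2 u v f
  proof -
    have "\<eta> f = u *\<^sub>R \<eta> f + v *\<^sub>R \<eta> f" using that(2) by (simp add: scaleR_add_left[symmetric])
    then show ?thesis
      using Adual_add[OF FA[OF that(1)]] Adual_scaleR[OF FA[OF that(1)]]
      by (simp add: scaleR_conv_of_real algebra_simps)
  qed
  show ?thesis
  proof (rule finite_coordinate_separation[where T = "\<lambda>c f. f c - \<eta> f", OF F(1) C affine far])
    fix \<mu> assume \<mu>: "\<And>f. linear (\<mu> f)"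
      and sep: "\<And>c. c \<in> C \<Longrightarrow> (\<Sum>f\<in>F. \<mu> f (f c - \<eta> f)) \<le> - \<epsilon>"
    define w where "w f = cnj (Complex (\<mu> f 1) (\<mu> f \<i>))" for f
    define \<phi> where "\<phi> x = (\<Sum>f\<in>F. w f * f x)" for x
    have \<phi>: "\<phi> \<in> Adual J" "\<eta> \<phi> = (\<Sum>f\<in>F. w f * \<eta> f)"
      using Abidual_sum[OF \<eta> F, of w] unfolding \<phi>_def[abs_def] by auto
    have coordinate: "\<mu> f z = Re (w f * z)" for f z
      unfolding w_def by (rule real_linear_complex_functional[OF \<mu>])
    have "(\<Sum>f\<in>F. \<mu> f (f c - \<eta> f)) = Re (\<phi> c) - Re (\<eta> \<phi>)" for c
      unfolding \<phi>(2) \<phi>_def coordinate by (simp add: sum_subtractf right_diff_distrib)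
    then have "Re (\<phi> c) \<le> Re (\<eta> \<phi>) - \<epsilon>" if "c \<in> C" for c
      using sep[OF that] by simp
    then show ?thesis using that \<phi>(1) by blast
  qed
qed

theorem rA_unit_ball_wstar_dense:
  fixes J :: "'a::{real_normed_algebra, banach} \<Rightarrow> 'a"
  assumes cs: "complex_structure J"
    and dense: "wstar_dense (dual (Aspace J)) (canon (Aspace J) ` rA J) (rAbidual J)"
  shows "wstar_dense (dual (Aspace J))
           (canon (Aspace J) ` {x \<in> rA J. norm x \<le> 1})
           {\<eta> \<in> rAbidual J. nrm (dual (dual (Aspace J))) \<eta> \<le> 1}"
  unfolding wstar_dense_def
proof (intro ballI allI impI)
  fix \<eta> F and \<epsilon> :: real
  assume \<eta>: "\<eta> \<in> {\<eta> \<in> rAbidual J. nrm (dual (dual (Aspace J))) \<eta> \<le> 1}"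
    and F: "finite F \<and> F \<subseteq> carr (dual (Aspace J))" and \<epsilon>: "0 < \<epsilon>"
  show "\<exists>d\<in>canon (Aspace J) ` {x \<in> rA J. norm x \<le> 1}. \<forall>f\<in>F. cmod (d f - \<eta> f) < \<epsilon>"
  proof (rule ccontr)
    assume "\<not> ?thesis"
    then have far: "\<exists>f\<in>F. \<epsilon> \<le> cmod (f c - \<eta> f)" if "c \<in> {x \<in> rA J. norm x \<le> 1}" for c
      using that F by (force simp: not_less canon_Aspace)
    have "\<eta> \<in> Abidual J" using \<eta> by (simp add: rAbidual_def)
    then obtain \<phi> where \<phi>: "\<phi> \<in> Adual J"
      and sep: "\<And>c. c \<in> {x \<in> rA J. norm x \<le> 1} \<Longrightarrow> Re (\<phi> c) \<le> Re (\<eta> \<phi>) - \<epsilon>"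
      using Abidual_separation[OF _ _ _ convex_rA_unit_ball rA_unit_ball_nonempty far] F by blast
    have "Re (\<eta> \<phi>) \<le> Re (\<eta> \<phi>) - \<epsilon>"
      using Re_bidual_le_of_rA_unit_ball_bound[OF cs dense \<phi>, of "Re (\<eta> \<phi>) - \<epsilon>"] sep \<eta> by blast
    then show False using \<epsilon> by simp
  qed
qed

section \<open>A contractive approximate identity in rA\<close>

lemma approximate_identity_filter:
  fixes C :: "'a::real_normed_algebra set"
  assumes approx: "\<And>S \<delta>. finite S \<Longrightarrow> 0 < \<delta> \<Longrightarrow>
      \<exists>c\<in>C. \<forall>a\<in>S. norm (c * a - a) < \<delta> \<and> norm (a * c - a) < \<delta>"
  shows "\<exists>F. F \<noteq> bot \<and> eventually (\<lambda>x. x \<in> C) F \<and>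
      (\<forall>a. ((\<lambda>x. x * a) \<longlongrightarrow> a) F \<and> ((\<lambda>x. a * x) \<longlongrightarrow> a) F)"
proof -
  define U where "U = (\<lambda>(S, \<delta>). {c \<in> C. \<forall>a\<in>S. norm (c * a - a) < \<delta> \<and> norm (a * c - a) < \<delta>})"
  define Idx where "Idx = {(S :: 'a set, \<delta> :: real). finite S \<and> 0 < \<delta>}"
  define F where "F = (INF i\<in>Idx. principal (U i))"
  have directed: "\<exists>k\<in>Idx. principal (U k) \<le> inf (principal (U i)) (principal (U j))"
    if "i \<in> Idx" "j \<in> Idx" for i j
  proof -
    obtain S1 \<delta>1 S2 \<delta>2 where ij: "i = (S1, \<delta>1)" "j = (S2, \<delta>2)" by (cases i, cases j)
    then have "(S1 \<union> S2, min \<delta>1 \<delta>2) \<in> Idx" using that by (simp add: Idx_def)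
    moreover have "U (S1 \<union> S2, min \<delta>1 \<delta>2) \<subseteq> U i \<inter> U j"
      unfolding ij U_def by auto
    ultimately show ?thesis unfolding inf_principal principal_le_iff by blast
  qed
  have close: "\<forall>\<^sub>F x in F. dist (x * a) a < e \<and> dist (a * x) a < e" if "0 < e" for a e
    unfolding F_def
    by (rule eventually_INF1[of "({a}, e)"]) (use that in \<open>simp_all add: Idx_def U_def eventually_principal dist_norm\<close>)
  have "principal (U i) \<noteq> bot" if i: "i \<in> Idx" for i
  proof -
    obtain S \<delta> where S: "i = (S, \<delta>)" "finite S" "0 < \<delta>" using i by (auto simp: Idx_def)
    then obtain c where "c \<in> U i" using approx[OF S(2,3)] by (auto simp: U_def)
    then show ?thesis by (auto simp: principal_eq_bot_iff)
  qed
  then have "F \<noteq> bot"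
    unfolding F_def using INF_filter_bot_base[of Idx "\<lambda>i. principal (U i)", OF directed] by blast
  moreover have "eventually (\<lambda>x. x \<in> C) F"
    unfolding F_def by (rule eventually_INF1[of "({}, 1)"]) (simp_all add: Idx_def U_def eventually_principal)
  moreover have "((\<lambda>x. x * a) \<longlongrightarrow> a) F \<and> ((\<lambda>x. a * x) \<longlongrightarrow> a) F" for a
  proof (intro conjI tendstoI)
    fix e :: real assume "0 < e"
    from close[OF this, of a] show "\<forall>\<^sub>F x in F. dist (x * a) a < e"
      by (rule eventually_mono) simp
    from close[OF \<open>0 < e\<close>, of a] show "\<forall>\<^sub>F x in F. dist (a * x) a < e"
      by (rule eventually_mono) simp
  qed
  ultimately show ?thesis by blast
qed

lemma wstar_dense_approx_family:
  assumes dense: "wstar_dense S D E" and \<Phi>: "\<Phi> \<in> E" and I: "finite I"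
    and f: "\<And>i. i \<in> I \<Longrightarrow> f i \<in> carr S" and \<epsilon>: "0 < \<epsilon>"
  shows "\<exists>d\<in>D. \<forall>i\<in>I. cmod (d (f i) - \<Phi> (f i)) < \<epsilon>"
proof -
  have "finite (f ` I) \<and> f ` I \<subseteq> carr S"
    using finite_imageI[OF I] image_subsetI[of I f, OF f] by blast
  moreover have "\<forall>F. finite F \<and> F \<subseteq> carr S \<longrightarrow> (\<forall>\<epsilon>>0. \<exists>d\<in>D. \<forall>x\<in>F. cmod (d x - \<Phi> x) < \<epsilon>)"
    using dense \<Phi> unfolding wstar_dense_def by (rule bspec)
  ultimately have "\<exists>d\<in>D. \<forall>x\<in>f ` I. cmod (d x - \<Phi> x) < \<epsilon>"
    using \<epsilon> by blast
  then show ?thesis by blast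
qed

text \<open>Since E is a mixed identity, the canonical images of a net in the unit ball of rA
  converging weak* to E form a weak approximate identity.\<close>

lemma rA_unit_ball_weak_approximate_unit:
  fixes J :: "'a::{real_normed_algebra, banach} \<Rightarrow> 'a"
  assumes cs: "complex_structure J"
    and dense: "wstar_dense (dual (Aspace J)) (canon (Aspace J) ` {x \<in> rA J. norm x \<le> 1})
           {\<eta> \<in> rAbidual J. nrm (dual (dual (Aspace J))) \<eta> \<le> 1}"
    and E: "E \<in> rAbidual J" "mixed_identity J E" "nrm (dual (dual (Aspace J))) E = 1"
    and G: "finite G" "G \<subseteq> Adual J" and S: "finite S" and \<epsilon>: "0 < \<epsilon>"
  shows "\<exists>c\<in>{x \<in> rA J. norm x \<le> 1}. \<forall>g\<in>G. \<forall>a\<in>S.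
           cmod (g (c * a - a)) < \<epsilon> \<and> cmod (g (a * c - a)) < \<epsilon>"
proof -
  define I where "I = G \<times> S \<times> (UNIV :: bool set)"
  define f :: "('a \<Rightarrow> complex) \<times> 'a \<times> bool \<Rightarrow> 'a \<Rightarrow> complex"
    where "f = (\<lambda>(g, a, b). if b then (\<lambda>y. g (y * a)) else (\<lambda>y. g (a * y)))"
  have I: "finite I" using G(1) S by (simp add: I_def)
  have f: "f (g, a, b) \<in> Adual J" and Ef: "E (f (g, a, b)) = g a" if "g \<in> G" for g a b
    using Adual_mult_right[of g J, OF _ cs] Adual_mult_left[of g J, OF _ cs]
      mixed_identity_apply[OF cs E(2), of g] that G(2)
    by (auto simp: f_def)
  have "E \<in> {\<eta> \<in> rAbidual J. nrm (dual (dual (Aspace J))) \<eta> \<le> 1}" using E by simp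
  moreover have "f i \<in> Adual J" if "i \<in> I" for i using f that by (auto simp: I_def)
  ultimately obtain c where c: "c \<in> {x \<in> rA J. norm x \<le> 1}"
    and close: "\<forall>i\<in>I. cmod (canon (Aspace J) c (f i) - E (f i)) < \<epsilon>"
    using wstar_dense_approx_family[OF dense _ I _ \<epsilon>] by blast
  have "cmod (g (c * a - a)) < \<epsilon> \<and> cmod (g (a * c - a)) < \<epsilon>" if "g \<in> G" "a \<in> S" for g a
  proof -
    have "g \<in> Adual J" using that(1) G(2) by blast
    then show ?thesis
      using bspec[OF close, of "(g, a, True)"] bspec[OF close, of "(g, a, False)"] that
      by (auto simp: I_def canon_Aspace f Ef) (auto simp: f_def Adual_diff)
  qed
  then show ?thesis using c by blast
qed

definition unit_defect :: "'a::real_normed_algebra \<Rightarrow> bool \<times> 'a \<Rightarrow> 'a" where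
  "unit_defect c = (\<lambda>(left, a). if left then c * a - a else a * c - a)"

lemma unit_defect_affine:
  "u + v = 1 \<Longrightarrow> unit_defect (u *\<^sub>R c1 + v *\<^sub>R c2) i = u *\<^sub>R unit_defect c1 i + v *\<^sub>R unit_defect c2 i"
proof -
  assume uv: "u + v = 1"
  obtain b a where i: "i = (b, a)" by (cases i)
  have "a = u *\<^sub>R a + v *\<^sub>R a" using uv by (simp add: scaleR_add_left[symmetric])
  then show ?thesis unfolding i unit_defect_def by (simp add: algebra_simps)
qed

text \<open>A Mazur-type argument: if no c in C were a norm approximate unit, the convex set of
  defect vectors would be separated from 0 in a finite power of A, contradicting weak approximation.\<close>

lemma approximate_unit_of_weak_approximate_unit:
  fixes J :: "'a::real_normed_algebra \<Rightarrow> 'a"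
  assumes cs: "complex_structure J" and C: "convex C" "C \<noteq> {}"
    and weak: "\<And>G S \<epsilon>. finite G \<Longrightarrow> G \<subseteq> Adual J \<Longrightarrow> finite S \<Longrightarrow> 0 < \<epsilon> \<Longrightarrow>
      \<exists>c\<in>C. \<forall>g\<in>G. \<forall>a\<in>S. cmod (g (c * a - a)) < \<epsilon> \<and> cmod (g (a * c - a)) < \<epsilon>"
    and S: "finite S" and \<delta>: "0 < \<delta>"
  shows "\<exists>c\<in>C. \<forall>a\<in>S. norm (c * a - a) < \<delta> \<and> norm (a * c - a) < \<delta>"
proof (rule ccontr)
  define I where "I = (UNIV :: bool set) \<times> S"
  have I: "finite I" using S by (simp add: I_def)
  assume contra: "\<not> ?thesis"
  have far: "\<exists>i\<in>I. \<delta> \<le> norm (unit_defect c i)" if c: "c \<in> C" for c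
  proof -
    obtain a where "a \<in> S" "\<delta> \<le> norm (c * a - a) \<or> \<delta> \<le> norm (a * c - a)"
      using contra c by (auto simp: not_less)
    then show ?thesis by (auto simp: I_def unit_defect_def)
  qed
  show False
  proof (rule finite_coordinate_separation[OF I C unit_defect_affine far])
    fix \<mu> assume \<mu>: "\<And>i. linear (\<mu> i)" "\<And>i y. \<mu> i y \<le> norm y"
      and sep: "\<And>c. c \<in> C \<Longrightarrow> (\<Sum>i\<in>I. \<mu> i (unit_defect c i)) \<le> - \<delta>"
    define g where "g i x = Complex (\<mu> i x) (- \<mu> i (J x))" for i x
    have g: "g i \<in> Adual J" for i
      unfolding g_def using complexified_functional[OF cs \<mu>(1), where M = 1] \<mu>(2) by simp
    \<comment> \<open>Weak approximation to precision \<delta>', summed over the 2 |S| coordinates, stays below \<delta>.\<close>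
    define \<delta>' where "\<delta>' = \<delta> / (real (card I) + 1)"
    have \<delta>': "0 < \<delta>'" using \<delta> by (simp add: \<delta>'_def add_pos_nonneg)
    obtain c where c: "c \<in> C" and close: "\<forall>h\<in>g ` I. \<forall>a\<in>S.
        cmod (h (c * a - a)) < \<delta>' \<and> cmod (h (a * c - a)) < \<delta>'"
      using weak[of "g ` I" S \<delta>'] I S \<delta>' g by blast
    have "- \<delta>' \<le> \<mu> i (unit_defect c i)" if "i \<in> I" for i
    proof -
      have "cmod (g i (unit_defect c i)) < \<delta>'"
        using close that by (auto simp: I_def unit_defect_def)
      then show ?thesis using abs_Re_le_cmod[of "g i (unit_defect c i)"] by (simp add: g_def)
    qed
    then have "- (real (card I) * \<delta>') \<le> (\<Sum>i\<in>I. \<mu> i (unit_defect c i))"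
      using sum_mono[of I "\<lambda>_. - \<delta>'"] by simp
    moreover have "real (card I) * \<delta>' < \<delta>"
      using \<delta> by (simp add: \<delta>'_def field_simps)
    ultimately show False using sep[OF c] by simp
  qed
qed

theorem proposition6p4:
  fixes J :: "'a::{real_normed_algebra, banach} \<Rightarrow> 'a"
  assumes "complex_structure J"
    and "approx_unital TYPE('a)"
    and "wstar_dense (dual (Aspace J)) (canon (Aspace J) ` rA J) (rAbidual J)"
  shows "wstar_dense (dual (Aspace J))
           (canon (Aspace J) ` {x \<in> rA J. norm x \<le> 1})
           {\<eta> \<in> rAbidual J. nrm (dual (dual (Aspace J))) \<eta> \<le> 1}
         \<and> ((\<exists>E\<in>rAbidual J. mixed_identity J E \<and> nrm (dual (dual (Aspace J))) E = 1) \<longrightarrow>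
         (\<exists>F :: 'a filter. F \<noteq> bot \<and> eventually (\<lambda>x. x \<in> rA J \<and> norm x \<le> 1) F \<and>
            (\<forall>a. ((\<lambda>x. x * a) \<longlongrightarrow> a) F \<and> ((\<lambda>x. a * x) \<longlongrightarrow> a) F)))"
proof (intro conjI impI)
  show dense: "wstar_dense (dual (Aspace J))
           (canon (Aspace J) ` {x \<in> rA J. norm x \<le> 1})
           {\<eta> \<in> rAbidual J. nrm (dual (dual (Aspace J))) \<eta> \<le> 1}"
    using rA_unit_ball_wstar_dense[OF assms(1,3)] .
  assume "\<exists>E\<in>rAbidual J. mixed_identity J E \<and> nrm (dual (dual (Aspace J))) E = 1"
  then obtain E where E: "E \<in> rAbidual J" "mixed_identity J E" "nrm (dual (dual (Aspace J))) E = 1"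
    by blast
  have "\<exists>c\<in>{x \<in> rA J. norm x \<le> 1}. \<forall>a\<in>S. norm (c * a - a) < \<delta> \<and> norm (a * c - a) < \<delta>"
    if "finite S" "0 < \<delta>" for S \<delta>
    using approximate_unit_of_weak_approximate_unit[OF assms(1) convex_rA_unit_ball rA_unit_ball_nonempty
        rA_unit_ball_weak_approximate_unit[OF assms(1) dense E] that] .
  from approximate_identity_filter[OF this]
  show "\<exists>F :: 'a filter. F \<noteq> bot \<and> eventually (\<lambda>x. x \<in> rA J \<and> norm x \<le> 1) F \<and>
            (\<forall>a. ((\<lambda>x. x * a) \<longlongrightarrow> a) F \<and> ((\<lambda>x. a * x) \<longlongrightarrow> a) F)"
    by simp
qed

end
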